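(* Let an FTTC mechanism satisfy bounded advantage. Then for every FEE problem, the output assignment $p$ satisfies bounded envy: for all $i,j\in I$, $$\max_{o\in O}\Big[\sum_{o'\succsim_i o}p_{j,o'}-\sum_{o'\succsim_i o}p_{i,o'}\Big]\le\sum_{o\in O:\,\omega_{j,o}>\omega_{i,o}}(\omega_{j,o}-\omega_{i,o}).$$
   Context: Fractional endowment exchange (FEE) problem: a tuple $(I,O,\succsim_I,\omega)$ where $I$ is a finite set of agents, $O$ a finite set of objects, each agent $i$ has a complete and transitive (possibly non-strict) preference relation $\succsim_i$ over $O$ with asymmetric part $\succ_i$ and symmetric part $\sim_i$, and $\omega=(\omega_{i,o})_{i\in I,o\in O}$ is an endowment matrix with $\omega_{i,o}\in[0,1]$, $\sum_{o\in O}\omega_{i,o}\le 1$ for each $i$, and $q_o=\sum_{i\in I}\omega_{i,o}$ an integer for each $o$. An assignment is a nonnegative matrix $p=(p_{i,o})$ with $\sum_i p_{i,o}\le q_o$ for all $o$ and $\sum_o p_{i,o}\le 1$ for all $i$; $p_i=(p_{i,o})_{o\in O}$ is $i$'s lottery. FTTC (Fractional Top Trading Cycle) on the full preference domain. Initialize $\omega(0)=\omega$, $p(0)=0$, $O(0)=O$. At step $d\ge1$ (with $O(d-1)\ne\emptyset$): (i) Labeling. Put $T_0=O(d-1)$. For $k=1,2,\dots$: let $L_k$ be the set of agents $i\notin L_1\cup\dots\cup L_{k-1}$ for which there exist $o\in T_{k-1}$ and $o'\in O\setminus(T_0\cup\dots\cup T_{k-1})$ with $p_{i,o'}(d-1)>0$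 and $o\sim_i o'$; for $i\in L_k$ let $\tilde O_i(d-1)$ be the set of all such $o'$ for this $i$, and let $T_k=\bigcup_{i\in L_k}\tilde O_i(d-1)$. Stop at the first $k$ with $L_k=\emptyset$. Set $L(d-1)=\bigcup_k L_k$, $\tilde O(d-1)=\bigcup_{k\ge1}T_k$, $\overline{O}(d-1)=O(d-1)\cup\tilde O(d-1)$, and $\tilde O_i(d-1)=\emptyset$ for $i\notin L(d-1)$. (ii) Pointing. The active agents are $I(d-1)=L(d-1)\cup\{i\in I:\sum_o\omega_{i,o}(d-1)>0\}$. For $i\in I(d-1)$ let $B_i$ be the set of $\succsim_i$-maximal elements of $\overline{O}(d-1)$, let $k_i$ be the least $k\ge0$ with $B_i\cap T_k\ne\emptyset$, and let $A_i(d)=B_i\cap T_{k_i}$. (iii) Trading. The mechanism chooses (possibly depending on the history): a ratio matrix $\lambda(d)=(\lambda_{i,o}(d))_{i\in I(d-1),o\in\overline{O}(d-1)}$, nonnegative, with $\sum_{i\in I(d-1)}\lambda_{i,o}(d)=1$ for each $o\in\overline O(d-1)$, $\lambda_{i,o}(d)>0$ only if $\omega_{i,o}(d-1)>0$ (for $o\in O(d-1)$) and only if $o\in\tilde O_i(d-1)$ (for $o\in\tilde O(d-1)$); a quota matrix $\beta(d)$ on $I(d-1)\times O(d-1)$ with $0\le\beta_{i,o}(d)\le\omega_{i,o}(d-1)$; a division matrix $\gamma(d)$ on $I(d-1)\times\overline O(d-1)$, nonnegative, with $\sum_o\gamma_{i,o}(d)=1$ and $\gamma_{i,o}(d)>0$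 only if $o\in A_i(d)$. Let $x^*(d)=(x^*_a(d))_{a\in I(d-1)\cup\overline O(d-1)}$ be the maximum (componentwise largest) nonnegative solution of $x_o=\sum_{i\in I(d-1)}\gamma_{i,o}(d)x_i$ for all $o\in\overline O(d-1)$ and $x_i=\sum_{o\in\overline O(d-1)}\lambda_{i,o}(d)x_o$ for all $i\in I(d-1)$, subject to $\lambda_{i,o}(d)x_o\le\beta_{i,o}(d)$ for $o\in O(d-1)$ and $\lambda_{i,o}(d)x_o\le p_{i,o}(d-1)$ for $o\in\tilde O(d-1)$. For $i\in I(d-1)$: $\omega_{i,o}(d)=\omega_{i,o}(d-1)-\lambda_{i,o}(d)x^*_o(d)$ if $o\in O(d-1)$ and $0$ otherwise; $p_{i,o}(d)=p_{i,o}(d-1)-\mathbf 1[o\in\tilde O_i(d-1)]\lambda_{i,o}(d)x^*_o(d)+\gamma_{i,o}(d)x^*_i(d)$ (with $\gamma_{i,o}(d)=0$ for $o\notin\overline O(d-1)$). For $i\notin I(d-1)$, $\omega_i(d)=\omega_i(d-1)$, $p_i(d)=p_i(d-1)$. Let $O(d)=\{o\in O(d-1):\sum_i\omega_{i,o}(d)>0\}$. If $O(d)=\emptyset$ stop and output $p(d)$; otherwise go to step $d+1$. (Standing assumption: the maximum solution exists at each step and the procedure ends after finitely many steps.) An FTTC mechanism is specified by a rule choosing $\lambda(d),\beta(d),\gamma(d)$ at every step. Bounded advantage: at every step $d$, for all $i,j\in I(d-1)$ and all $o\in O(d-1)$, if $\omega_{i,o}(d-1)\ge\omega_{j,o}(d-1)$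 then $\lambda_{i,o}(d)\ge\lambda_{j,o}(d)$ and $\omega_{i,o}(d)\ge\omega_{j,o}(d)$. *)

theory Defs
  imports Complex_Main
begin

(* Preferences: R i a b  means  a \<succeq>_i b  (agent i weakly prefers a to b). *)

definition indiff :: "('i \<Rightarrow> 'o \<Rightarrow> 'o \<Rightarrow> bool) \<Rightarrow> 'i \<Rightarrow> 'o \<Rightarrow> 'o \<Rightarrow> bool" where
  "indiff R i a b \<longleftrightarrow> R i a b \<and> R i b a"

definition pref_domain :: "'i set \<Rightarrow> 'o set \<Rightarrow> ('i \<Rightarrow> 'o \<Rightarrow> 'o \<Rightarrow> bool) \<Rightarrow> bool" where
  "pref_domain I Obj R \<longleftrightarrow>
     (\<forall>i\<in>I. (\<forall>a\<in>Obj. \<forall>b\<in>Obj. R i a b \<or> R i b a) \<and>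
             (\<forall>a\<in>Obj. \<forall>b\<in>Obj. \<forall>c\<in>Obj. R i a b \<longrightarrow> R i b c \<longrightarrow> R i a c))"

definition FEE_problem :: "'i set \<Rightarrow> 'o set \<Rightarrow> ('i \<Rightarrow> 'o \<Rightarrow> 'o \<Rightarrow> bool) \<Rightarrow> ('i \<Rightarrow> 'o \<Rightarrow> real) \<Rightarrow> bool" where
  "FEE_problem I Obj R \<omega> \<longleftrightarrow>
     finite I \<and> finite Obj \<and> pref_domain I Obj R \<and>
     (\<forall>i\<in>I. \<forall>ob\<in>Obj. 0 \<le> \<omega> i ob \<and> \<omega> i ob \<le> 1) \<and>
     (\<forall>i\<in>I. (\<Sum>ob\<in>Obj. \<omega> i ob) \<le> 1) \<and>
     (\<forall>ob\<in>Obj. (\<Sum>i\<in>I. \<omega> i ob) \<in> \<int>)"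

(* Labeling step (i): lab ... k = (T_k, L_k, T_0 \<union> ... \<union> T_k, L_1 \<union> ... \<union> L_k),
   with current object set Oc = Obj(d-1) and current assignment pc = p(d-1). *)
definition lab_Oi :: "'o set \<Rightarrow> ('i \<Rightarrow> 'o \<Rightarrow> 'o \<Rightarrow> bool) \<Rightarrow> ('i \<Rightarrow> 'o \<Rightarrow> real)
    \<Rightarrow> 'o set \<Rightarrow> 'o set \<Rightarrow> 'i \<Rightarrow> 'o set" where
  "lab_Oi Obj R pc T TA i = {ob'\<in>Obj - TA. pc i ob' > 0 \<and> (\<exists>ob\<in>T. indiff R i ob ob')}"

primrec lab :: "'i set \<Rightarrow> 'o set \<Rightarrow> ('i \<Rightarrow> 'o \<Rightarrow> 'o \<Rightarrow> bool) \<Rightarrow> 'o set \<Rightarrow> ('i \<Rightarrow> 'o \<Rightarrow> real)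
    \<Rightarrow> nat \<Rightarrow> 'o set \<times> 'i set \<times> 'o set \<times> 'i set" where
  "lab I Obj R Oc pc 0 = (Oc, {}, Oc, {})"
| "lab I Obj R Oc pc (Suc k) =
     (case lab I Obj R Oc pc k of (T, L, TA, LA) \<Rightarrow>
       let L' = {i\<in>I. i \<notin> LA \<and> lab_Oi Obj R pc T TA i \<noteq> {}};
           T' = (\<Union>i\<in>L'. lab_Oi Obj R pc T TA i)
       in (T', L', TA \<union> T', LA \<union> L'))"

definition labT where "labT I Obj R Oc pc k = fst (lab I Obj R Oc pc k)"
definition labL where "labL I Obj R Oc pc k = fst (snd (lab I Obj R Oc pc k))"

definition Ltil where "Ltil I Obj R Oc pc = (\<Union>k. labL I Obj R Oc pc (Suc k))"
definition Otil where "Otil I Obj R Oc pc = (\<Union>k. labT I Obj R Oc pc (Suc k))"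
definition Obar where "Obar I Obj R Oc pc = Oc \<union> Otil I Obj R Oc pc"
definition Otil_i where
  "Otil_i I Obj R Oc pc i =
     (\<Union>k. if i \<in> labL I Obj R Oc pc (Suc k)
          then (case lab I Obj R Oc pc k of (T, L, TA, LA) \<Rightarrow> lab_Oi Obj R pc T TA i)
          else {})"

definition Iact where
  "Iact I Obj R Oc om pc = Ltil I Obj R Oc pc \<union> {i\<in>I. (\<Sum>ob\<in>Obj. om i ob) > 0}"

definition Bset where
  "Bset I Obj R Oc pc i = {ob\<in>Obar I Obj R Oc pc. \<forall>ob'\<in>Obar I Obj R Oc pc. R i ob ob'}"
definition Aset where
  "Aset I Obj R Oc pc i =
     Bset I Obj R Oc pc i \<inter> labT I Obj R Oc pc (LEAST k. Bset I Obj R Oc pc i \<inter> labT I Obj R Oc pc k \<noteq> {})"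

definition feasible ::
  "'i set \<Rightarrow> 'o set \<Rightarrow> 'o set \<Rightarrow> 'o set \<Rightarrow> ('i \<Rightarrow> 'o \<Rightarrow> real) \<Rightarrow> ('i \<Rightarrow> 'o \<Rightarrow> real)
   \<Rightarrow> ('i \<Rightarrow> 'o \<Rightarrow> real) \<Rightarrow> ('i \<Rightarrow> 'o \<Rightarrow> real) \<Rightarrow> ('i \<Rightarrow> real) \<Rightarrow> ('o \<Rightarrow> real) \<Rightarrow> bool" where
  "feasible Ia Oc Ot Ob lam beta gam pc xi xo \<longleftrightarrow>
     (\<forall>i\<in>Ia. 0 \<le> xi i) \<and> (\<forall>ob\<in>Ob. 0 \<le> xo ob) \<and>
     (\<forall>ob\<in>Ob. xo ob = (\<Sum>i\<in>Ia. gam i ob * xi i)) \<and>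
     (\<forall>i\<in>Ia. xi i = (\<Sum>ob\<in>Ob. lam i ob * xo ob)) \<and>
     (\<forall>i\<in>Ia. \<forall>ob\<in>Oc. lam i ob * xo ob \<le> beta i ob) \<and>
     (\<forall>i\<in>Ia. \<forall>ob\<in>Ot. lam i ob * xo ob \<le> pc i ob)"

definition max_solution where
  "max_solution Ia Oc Ot Ob lam beta gam pc xi xo \<longleftrightarrow>
     feasible Ia Oc Ot Ob lam beta gam pc xi xo \<and>
     (\<forall>yi yo. feasible Ia Oc Ot Ob lam beta gam pc yi yo \<longrightarrow>
        (\<forall>i\<in>Ia. yi i \<le> xi i) \<and> (\<forall>ob\<in>Ob. yo ob \<le> xo ob))"

(* One FTTC step d, from state (om, pc) = (omega(d-1), p(d-1)) with Oc = Obj(d-1),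
   using the mechanism's choices lam, beta, gam and the maximum solution (xi, xo),
   to state (om', pc') = (omega(d), p(d)). *)
definition fttc_step ::
  "'i set \<Rightarrow> 'o set \<Rightarrow> ('i \<Rightarrow> 'o \<Rightarrow> 'o \<Rightarrow> bool) \<Rightarrow> 'o set
   \<Rightarrow> ('i \<Rightarrow> 'o \<Rightarrow> real) \<Rightarrow> ('i \<Rightarrow> 'o \<Rightarrow> real)
   \<Rightarrow> ('i \<Rightarrow> 'o \<Rightarrow> real) \<Rightarrow> ('i \<Rightarrow> 'o \<Rightarrow> real) \<Rightarrow> ('i \<Rightarrow> 'o \<Rightarrow> real)
   \<Rightarrow> ('i \<Rightarrow> real) \<Rightarrow> ('o \<Rightarrow> real)
   \<Rightarrow> ('i \<Rightarrow> 'o \<Rightarrow> real) \<Rightarrow> ('i \<Rightarrow> 'o \<Rightarrow> real) \<Rightarrow> bool" where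
  "fttc_step I Obj R Oc om pc lam beta gam xi xo om' pc' \<longleftrightarrow>
     (let Ia = Iact I Obj R Oc om pc; Ot = Otil I Obj R Oc pc; Ob = Obar I Obj R Oc pc in
       (\<forall>i\<in>Ia. \<forall>ob\<in>Ob. 0 \<le> lam i ob) \<and>
       (\<forall>ob\<in>Ob. (\<Sum>i\<in>Ia. lam i ob) = 1) \<and>
       (\<forall>i\<in>Ia. \<forall>ob\<in>Oc. lam i ob > 0 \<longrightarrow> om i ob > 0) \<and>
       (\<forall>i\<in>Ia. \<forall>ob\<in>Ot. lam i ob > 0 \<longrightarrow> ob \<in> Otil_i I Obj R Oc pc i) \<and>
       (\<forall>i\<in>Ia. \<forall>ob\<in>Oc. 0 \<le> beta i ob \<and> beta i ob \<le> om i ob) \<and>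
       (\<forall>i\<in>Ia. (\<forall>ob\<in>Ob. 0 \<le> gam i ob) \<and> (\<Sum>ob\<in>Ob. gam i ob) = 1 \<and>
                (\<forall>ob\<in>Ob. gam i ob > 0 \<longrightarrow> ob \<in> Aset I Obj R Oc pc i)) \<and>
       max_solution Ia Oc Ot Ob lam beta gam pc xi xo \<and>
       (\<forall>i\<in>Ia. \<forall>ob\<in>Obj.
          om' i ob = (if ob \<in> Oc then om i ob - lam i ob * xo ob else 0) \<and>
          pc' i ob = pc i ob
                    - (if ob \<in> Otil_i I Obj R Oc pc i then lam i ob * xo ob else 0)
                    + (if ob \<in> Ob then gam i ob * xi i else 0)) \<and>
       (\<forall>i\<in>I - Ia. \<forall>ob\<in>Obj. om' i ob = om i ob \<and> pc' i ob = pc i ob))"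

primrec curO :: "'i set \<Rightarrow> 'o set \<Rightarrow> (nat \<Rightarrow> 'i \<Rightarrow> 'o \<Rightarrow> real) \<Rightarrow> nat \<Rightarrow> 'o set" where
  "curO I Obj om 0 = Obj"
| "curO I Obj om (Suc d) = {ob\<in>curO I Obj om d. (\<Sum>i\<in>I. om (Suc d) i ob) > 0}"

(* A complete terminating FTTC run with D steps: om d = omega(d), pp d = p(d);
   lam d, beta d, gam d, xi d, xo d are the choices / maximum solution at step d (d \<ge> 1).
   The output assignment is pp D. *)
definition fttc_run ::
  "'i set \<Rightarrow> 'o set \<Rightarrow> ('i \<Rightarrow> 'o \<Rightarrow> 'o \<Rightarrow> bool) \<Rightarrow> ('i \<Rightarrow> 'o \<Rightarrow> real)
   \<Rightarrow> (nat \<Rightarrow> 'i \<Rightarrow> 'o \<Rightarrow> real) \<Rightarrow> (nat \<Rightarrow> 'i \<Rightarrow> 'o \<Rightarrow> real)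
   \<Rightarrow> (nat \<Rightarrow> 'i \<Rightarrow> 'o \<Rightarrow> real) \<Rightarrow> (nat \<Rightarrow> 'i \<Rightarrow> 'o \<Rightarrow> real) \<Rightarrow> (nat \<Rightarrow> 'i \<Rightarrow> 'o \<Rightarrow> real)
   \<Rightarrow> (nat \<Rightarrow> 'i \<Rightarrow> real) \<Rightarrow> (nat \<Rightarrow> 'o \<Rightarrow> real) \<Rightarrow> nat \<Rightarrow> bool" where
  "fttc_run I Obj R \<omega> om pp lam beta gam xi xo D \<longleftrightarrow>
     (\<forall>i\<in>I. \<forall>ob\<in>Obj. om 0 i ob = \<omega> i ob \<and> pp 0 i ob = 0) \<and>
     curO I Obj om D = {} \<and>
     (\<forall>d<D. curO I Obj om d \<noteq> {} \<and>
        fttc_step I Obj R (curO I Obj om d) (om d) (pp d)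
          (lam (Suc d)) (beta (Suc d)) (gam (Suc d)) (xi (Suc d)) (xo (Suc d))
          (om (Suc d)) (pp (Suc d)))"

definition bounded_advantage ::
  "'i set \<Rightarrow> 'o set \<Rightarrow> ('i \<Rightarrow> 'o \<Rightarrow> 'o \<Rightarrow> bool)
   \<Rightarrow> (nat \<Rightarrow> 'i \<Rightarrow> 'o \<Rightarrow> real) \<Rightarrow> (nat \<Rightarrow> 'i \<Rightarrow> 'o \<Rightarrow> real) \<Rightarrow> (nat \<Rightarrow> 'i \<Rightarrow> 'o \<Rightarrow> real)
   \<Rightarrow> nat \<Rightarrow> bool" where
  "bounded_advantage I Obj R om pp lam D \<longleftrightarrow>
     (\<forall>d<D. let Oc = curO I Obj om d; Ia = Iact I Obj R Oc (om d) (pp d) in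
        \<forall>i\<in>Ia. \<forall>j\<in>Ia. \<forall>ob\<in>Oc. om d i ob \<ge> om d j ob \<longrightarrow>
           lam (Suc d) i ob \<ge> lam (Suc d) j ob \<and> om (Suc d) i ob \<ge> om (Suc d) j ob)"

end

theory Submission
  imports Defs
begin

text \<open>Fix agents \<open>i\<close>, \<open>j\<close> and an object \<open>o\<close>, and let \<open>U\<close> be the set of objects that \<open>i\<close> weakly
prefers to \<open>o\<close>. Every object an agent holds is weakly preferred to everything still on the
market \<open>\<overline>O(d)\<close>, so \<open>\<overline>O(d)\<close> shrinks and \<open>U \<inter> \<overline>O(d) \<noteq> {}\<close> holds exactly up to some step \<open>t\<close>.
Before \<open>t\<close>, agent \<open>i\<close> points into \<open>U\<close>, so her share of \<open>U\<close> grows at least by the amount of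
endowment she sells; after \<open>t\<close> nobody's share of \<open>U\<close> changes. Hence at the end \<open>i\<close> holds at
least what she sold up to \<open>t\<close> in \<open>U\<close>, while \<open>j\<close> holds at most what he sold up to \<open>t\<close>. Bounded
advantage keeps the order of remaining endowments and of amounts sold, so the difference of
the amounts sold is at most the sum of the positive parts of \<open>\<omega>\<^sub>j - \<omega>\<^sub>i\<close>.\<close>

definition labTA where "labTA I Obj R Oc pc k = fst (snd (snd (lab I Obj R Oc pc k)))"
definition labLA where "labLA I Obj R Oc pc k = snd (snd (snd (lab I Obj R Oc pc k)))"

lemma lab_components:
  "lab I Obj R Oc pc k =
     (labT I Obj R Oc pc k, labL I Obj R Oc pc k, labTA I Obj R Oc pc k, labLA I Obj R Oc pc k)"
  by (simp add: labT_def labL_def labTA_def labLA_def)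

lemma labL_Suc:
  "labL I Obj R Oc pc (Suc k) =
     {i\<in>I. i \<notin> labLA I Obj R Oc pc k \<and>
        lab_Oi Obj R pc (labT I Obj R Oc pc k) (labTA I Obj R Oc pc k) i \<noteq> {}}"
  by (subst labL_def, simp add: lab_components[of I Obj R Oc pc k] Let_def)

lemma labT_Suc:
  "labT I Obj R Oc pc (Suc k) =
     (\<Union>i\<in>labL I Obj R Oc pc (Suc k). lab_Oi Obj R pc (labT I Obj R Oc pc k) (labTA I Obj R Oc pc k) i)"
  by (subst labT_def, simp add: labL_Suc lab_components[of I Obj R Oc pc k] Let_def)

lemma labTA_Suc: "labTA I Obj R Oc pc (Suc k) = labTA I Obj R Oc pc k \<union> labT I Obj R Oc pc (Suc k)"
  by (subst labTA_def, simp add: labT_Suc labL_Suc lab_components[of I Obj R Oc pc k] Let_def)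

lemma labLA_Suc: "labLA I Obj R Oc pc (Suc k) = labLA I Obj R Oc pc k \<union> labL I Obj R Oc pc (Suc k)"
  by (subst labLA_def, simp add: labL_Suc lab_components[of I Obj R Oc pc k] Let_def)

lemma lab_0:
  "labT I Obj R Oc pc 0 = Oc" "labL I Obj R Oc pc 0 = {}"
  "labTA I Obj R Oc pc 0 = Oc" "labLA I Obj R Oc pc 0 = {}"
  by (simp_all add: labT_def labL_def labTA_def labLA_def)

lemma labTA_eq_UN: "labTA I Obj R Oc pc k = (\<Union>m\<le>k. labT I Obj R Oc pc m)"
  by (induction k) (auto simp: lab_0 labTA_Suc le_Suc_eq)

lemma labLA_eq_UN: "labLA I Obj R Oc pc k = (\<Union>m<k. labL I Obj R Oc pc (Suc m))"
  by (induction k) (auto simp: lab_0 labLA_Suc less_Suc_eq)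

lemma labT_Suc_subset: "labT I Obj R Oc pc (Suc k) \<subseteq> Obj - labTA I Obj R Oc pc k"
  by (auto simp: labT_Suc lab_Oi_def)

lemma labL_subset: "labL I Obj R Oc pc k \<subseteq> I"
  by (cases k) (auto simp: labL_Suc lab_0)

lemma Otil_i_subset_Otil: "Otil_i I Obj R Oc pc i \<subseteq> Otil I Obj R Oc pc"
  unfolding Otil_i_def Otil_def by (auto simp: lab_components labT_Suc split: if_splits)

lemma Otil_subset: "Otil I Obj R Oc pc \<subseteq> Obj"
  using labT_Suc_subset[of I Obj R Oc pc] unfolding Otil_def by blast

lemma Otil_disjoint_Oc: "Oc \<inter> Otil I Obj R Oc pc = {}"
proof -
  have "Oc \<subseteq> labTA I Obj R Oc pc k" for k
    by (auto simp: labTA_eq_UN lab_0 intro!: exI[of _ 0])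
  then show ?thesis
    using labT_Suc_subset[of I Obj R Oc pc] unfolding Otil_def by blast
qed

lemma labT_subset_Obar: "labT I Obj R Oc pc m \<subseteq> Obar I Obj R Oc pc"
  by (cases m) (auto simp: lab_0 Obar_def Otil_def)

lemma labTA_subset_Obar: "labTA I Obj R Oc pc k \<subseteq> Obar I Obj R Oc pc"
  unfolding labTA_eq_UN by (rule UN_least) (rule labT_subset_Obar)

lemma Obar_subset: "Oc \<subseteq> Obj \<Longrightarrow> Obar I Obj R Oc pc \<subseteq> Obj"
  using Otil_subset[of I Obj R Oc pc] unfolding Obar_def by blast

lemma Iact_subset: "Iact I Obj R Oc om pc \<subseteq> I"
  using labL_subset[of I Obj R Oc pc] unfolding Iact_def Ltil_def by blast

lemma Obar_least:
  assumes "Oc \<subseteq> X"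
    and closed: "\<And>k w z. k \<in> I \<Longrightarrow> w \<in> Obj \<Longrightarrow> pc k w > 0 \<Longrightarrow> z \<in> X \<Longrightarrow> indiff R k z w \<Longrightarrow> w \<in> X"
  shows "Obar I Obj R Oc pc \<subseteq> X"
proof -
  have "labTA I Obj R Oc pc k \<subseteq> X" for k
  proof (induction k)
    case 0
    then show ?case using assms(1) by (simp add: lab_0)
  next
    case (Suc k)
    have "w \<in> X" if "w \<in> labT I Obj R Oc pc (Suc k)" for w
    proof -
      from that obtain i z where "i \<in> labL I Obj R Oc pc (Suc k)" "z \<in> labT I Obj R Oc pc k"
          "indiff R i z w" "pc i w > 0" "w \<in> Obj"
        by (auto simp: labT_Suc lab_Oi_def)
      moreover have "z \<in> X" using Suc calculation(2) by (auto simp: labTA_eq_UN)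
      ultimately show "w \<in> X" using closed labL_subset[of I Obj R Oc pc "Suc k"] by blast
    qed
    then show ?case using Suc by (auto simp: labTA_Suc)
  qed
  then show ?thesis
    unfolding Obar_def Otil_def using assms(1) labTA_Suc[of I Obj R Oc pc] by blast
qed

text \<open>If \<open>k\<close> is already labelled, via \<open>z\<^sub>1 \<sim> w\<^sub>1\<close> with \<open>w\<^sub>1\<close> held, then
\<open>w \<succeq> z\<^sub>1 \<sim> w\<^sub>1 \<succeq> z \<sim> w\<close> gives \<open>z\<^sub>1 \<sim> w\<close>, so \<open>w\<close> lies in the layer after that of \<open>z\<^sub>1\<close>.\<close>

lemma Obar_closed_under_indiff:
  assumes k: "k \<in> I" and Oc: "Oc \<subseteq> Obj"
    and trans: "\<And>a b c. a \<in> Obj \<Longrightarrow> b \<in> Obj \<Longrightarrow> c \<in> Obj \<Longrightarrow> R k a b \<Longrightarrow> R k b c \<Longrightarrow> R k a c"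
    and held_best: "\<And>w' z'. w' \<in> Obj \<Longrightarrow> pc k w' > 0 \<Longrightarrow> z' \<in> Obar I Obj R Oc pc \<Longrightarrow> R k w' z'"
    and w: "w \<in> Obj" "pc k w > 0" and z: "z \<in> Obar I Obj R Oc pc" and zw: "indiff R k z w"
  shows "w \<in> Obar I Obj R Oc pc"
proof -
  let ?T = "labT I Obj R Oc pc" and ?TA = "labTA I Obj R Oc pc"
    and ?L = "labL I Obj R Oc pc" and ?LA = "labLA I Obj R Oc pc"
  have caught: "w \<in> Obar I Obj R Oc pc"
    if "k \<in> ?L (Suc m)" "z' \<in> ?T m" "indiff R k z' w" for m z'
  proof (cases "w \<in> ?TA m")
    case True
    then show ?thesis using labTA_subset_Obar[of I Obj R Oc pc m] by blast
  next
    case False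
    with that w have "w \<in> ?T (Suc m)" by (auto simp: labT_Suc lab_Oi_def)
    then show ?thesis using labT_subset_Obar[of I Obj R Oc pc "Suc m"] by blast
  qed
  obtain m where zm: "z \<in> ?T m"
    using z unfolding Obar_def Otil_def by (metis UN_E Un_iff lab_0(1))
  show ?thesis
  proof (cases "k \<in> ?LA m")
    case False
    show ?thesis
    proof (cases "w \<in> ?TA m")
      case True
      then show ?thesis using labTA_subset_Obar[of I Obj R Oc pc m] by blast
    next
      case notTA: False
      with False k w zm zw have "k \<in> ?L (Suc m)" by (auto simp: labL_Suc lab_Oi_def)
      then show ?thesis using caught zm zw by blast
    qed
  next
    case True
    then obtain m' where km': "k \<in> ?L (Suc m')" unfolding labLA_eq_UN by auto
    then obtain w1 z1 where w1: "w1 \<in> Obj" "pc k w1 > 0" and z1: "z1 \<in> ?T m'" "indiff R k z1 w1"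
      unfolding labL_Suc lab_Oi_def by auto
    have z1_Obar: "z1 \<in> Obar I Obj R Oc pc" using z1(1) labT_subset_Obar[of I Obj R Oc pc m'] by blast
    have objs: "z1 \<in> Obj" "z \<in> Obj" using z1_Obar z Obar_subset[OF Oc] by auto
    have "R k z w" "R k z1 w1" using zw z1(2) unfolding indiff_def by simp_all
    then have "R k z1 w"
      using trans[of z1 w1 w] trans[of w1 z w] objs w w1 held_best[OF w1 z] by blast
    then have "indiff R k z1 w" using held_best[OF w z1_Obar] unfolding indiff_def by simp
    then show ?thesis using caught km' z1(1) by blast
  qed
qed

lemma downward_closed_threshold:
  fixes D :: nat
  assumes down: "\<And>d. Suc d < D \<Longrightarrow> P (Suc d) \<Longrightarrow> P d"
  obtains t where "t \<le> D" "\<And>d. d < t \<Longrightarrow> P d" "\<And>d. t \<le> d \<Longrightarrow> d < D \<Longrightarrow> \<not> P d"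
proof (cases "\<forall>d<D. P d")
  case True
  then show ?thesis using that[of D] by auto
next
  case False
  define t where "t = (LEAST d. d < D \<and> \<not> P d)"
  have t: "t < D" "\<not> P t" using False LeastI_ex[of "\<lambda>d. d < D \<and> \<not> P d"] by (auto simp: t_def)
  have before: "P d" if "d < t" for d
    using that t not_less_Least[of d "\<lambda>d. d < D \<and> \<not> P d"] by (auto simp: t_def)
  have after: "\<not> P d" if "t \<le> d" "d < D" for d
  proof
    assume "P d"
    from \<open>t \<le> d\<close> this have "P t"
      by (induction rule: inc_induct) (use \<open>d < D\<close> down in auto)
    with t show False by simp
  qed
  show ?thesis using that[OF less_imp_le[OF t(1)] before after] .
qed

locale fttc_execution =
  fixes I :: "'i set" and Obj :: "'o set" and R :: "'i \<Rightarrow> 'o \<Rightarrow> 'o \<Rightarrow> bool"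
    and \<omega> :: "'i \<Rightarrow> 'o \<Rightarrow> real"
    and om pp lam beta gam :: "nat \<Rightarrow> 'i \<Rightarrow> 'o \<Rightarrow> real"
    and xi :: "nat \<Rightarrow> 'i \<Rightarrow> real" and xo :: "nat \<Rightarrow> 'o \<Rightarrow> real" and D :: nat
  assumes fee: "FEE_problem I Obj R \<omega>"
    and run: "fttc_run I Obj R \<omega> om pp lam beta gam xi xo D"
begin

abbreviation "Oc d \<equiv> curO I Obj om d"
abbreviation "Ob d \<equiv> Obar I Obj R (Oc d) (pp d)"
abbreviation "Ot d \<equiv> Otil I Obj R (Oc d) (pp d)"
abbreviation "Ia d \<equiv> Iact I Obj R (Oc d) (om d) (pp d)"
abbreviation "Oti d k \<equiv> Otil_i I Obj R (Oc d) (pp d) k"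

lemma finite_I: "finite I" and finite_Obj: "finite Obj"
  using fee by (auto simp: FEE_problem_def)

lemma pref_trans:
  "k \<in> I \<Longrightarrow> a \<in> Obj \<Longrightarrow> b \<in> Obj \<Longrightarrow> c \<in> Obj \<Longrightarrow> R k a b \<Longrightarrow> R k b c \<Longrightarrow> R k a c"
  using fee unfolding FEE_problem_def pref_domain_def by blast

lemma \<omega>_nonneg: "k \<in> I \<Longrightarrow> y \<in> Obj \<Longrightarrow> 0 \<le> \<omega> k y"
  using fee by (simp add: FEE_problem_def)

lemma om_0: "k \<in> I \<Longrightarrow> y \<in> Obj \<Longrightarrow> om 0 k y = \<omega> k y"
  and pp_0: "k \<in> I \<Longrightarrow> y \<in> Obj \<Longrightarrow> pp 0 k y = 0"
  using run by (auto simp: fttc_run_def)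

lemma run_step:
  "d < D \<Longrightarrow> fttc_step I Obj R (Oc d) (om d) (pp d)
     (lam (Suc d)) (beta (Suc d)) (gam (Suc d)) (xi (Suc d)) (xo (Suc d)) (om (Suc d)) (pp (Suc d))"
  using run by (simp add: fttc_run_def)

lemma Oc_subset: "Oc d \<subseteq> Obj" by (induction d) auto
lemma Ob_subset: "Ob d \<subseteq> Obj" using Obar_subset[OF Oc_subset] .
lemma Ia_subset: "Ia d \<subseteq> I" using Iact_subset .
lemma Oti_subset_Ot: "Oti d k \<subseteq> Ot d" using Otil_i_subset_Otil .
lemma Ob_eq: "Ob d = Oc d \<union> Ot d" unfolding Obar_def ..
lemma finite_Oc: "finite (Oc d)" using finite_subset[OF Oc_subset finite_Obj] .
lemma finite_Ot: "finite (Ot d)" using finite_subset[OF Otil_subset finite_Obj] .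
lemma finite_Ob: "finite (Ob d)" using finite_subset[OF Ob_subset finite_Obj] .

context
  fixes d assumes d: "d < D"
begin

lemma lam_nonneg: "k \<in> Ia d \<Longrightarrow> y \<in> Ob d \<Longrightarrow> 0 \<le> lam (Suc d) k y"
  using run_step[OF d] unfolding fttc_step_def Let_def by blast
lemma lam_pos_Otil: "k \<in> Ia d \<Longrightarrow> y \<in> Ot d \<Longrightarrow> lam (Suc d) k y > 0 \<Longrightarrow> y \<in> Oti d k"
  using run_step[OF d] unfolding fttc_step_def Let_def by blast
lemma beta_le_om: "k \<in> Ia d \<Longrightarrow> y \<in> Oc d \<Longrightarrow> beta (Suc d) k y \<le> om d k y"
  using run_step[OF d] unfolding fttc_step_def Let_def by blast
lemma gam_nonneg: "k \<in> Ia d \<Longrightarrow> y \<in> Ob d \<Longrightarrow> 0 \<le> gam (Suc d) k y"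
  using run_step[OF d] unfolding fttc_step_def Let_def by blast
lemma sum_gam: "k \<in> Ia d \<Longrightarrow> (\<Sum>y\<in>Ob d. gam (Suc d) k y) = 1"
  using run_step[OF d] unfolding fttc_step_def Let_def by blast
lemma gam_pos_Aset: "k \<in> Ia d \<Longrightarrow> y \<in> Ob d \<Longrightarrow> gam (Suc d) k y > 0 \<Longrightarrow> y \<in> Aset I Obj R (Oc d) (pp d) k"
  using run_step[OF d] unfolding fttc_step_def Let_def by blast
lemma om_Suc: "k \<in> Ia d \<Longrightarrow> y \<in> Obj \<Longrightarrow>
    om (Suc d) k y = (if y \<in> Oc d then om d k y - lam (Suc d) k y * xo (Suc d) y else 0)"
  using run_step[OF d] unfolding fttc_step_def Let_def by blast
lemma pp_Suc: "k \<in> Ia d \<Longrightarrow> y \<in> Obj \<Longrightarrow>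
    pp (Suc d) k y = pp d k y - (if y \<in> Oti d k then lam (Suc d) k y * xo (Suc d) y else 0)
                     + (if y \<in> Ob d then gam (Suc d) k y * xi (Suc d) k else 0)"
  using run_step[OF d] unfolding fttc_step_def Let_def by blast
lemma inactive_unchanged:
  "k \<in> I \<Longrightarrow> k \<notin> Ia d \<Longrightarrow> y \<in> Obj \<Longrightarrow> om (Suc d) k y = om d k y \<and> pp (Suc d) k y = pp d k y"
  using run_step[OF d] unfolding fttc_step_def Let_def by blast

lemma step_feasible: "feasible (Ia d) (Oc d) (Ot d) (Ob d) (lam (Suc d)) (beta (Suc d)) (gam (Suc d)) (pp d)
    (xi (Suc d)) (xo (Suc d))"
  using run_step[OF d] unfolding fttc_step_def Let_def max_solution_def by blast

lemma xi_nonneg: "k \<in> Ia d \<Longrightarrow> 0 \<le> xi (Suc d) k"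
  using step_feasible unfolding feasible_def by blast
lemma xo_nonneg: "y \<in> Ob d \<Longrightarrow> 0 \<le> xo (Suc d) y"
  using step_feasible unfolding feasible_def by blast
lemma xi_eq: "k \<in> Ia d \<Longrightarrow> xi (Suc d) k = (\<Sum>y\<in>Ob d. lam (Suc d) k y * xo (Suc d) y)"
  using step_feasible unfolding feasible_def by blast
lemma traded_le_beta: "k \<in> Ia d \<Longrightarrow> y \<in> Oc d \<Longrightarrow> lam (Suc d) k y * xo (Suc d) y \<le> beta (Suc d) k y"
  using step_feasible unfolding feasible_def by blast
lemma traded_le_pp: "k \<in> Ia d \<Longrightarrow> y \<in> Ot d \<Longrightarrow> lam (Suc d) k y * xo (Suc d) y \<le> pp d k y"
  using step_feasible unfolding feasible_def by blast

lemma traded_nonneg: "k \<in> Ia d \<Longrightarrow> y \<in> Ob d \<Longrightarrow> 0 \<le> lam (Suc d) k y * xo (Suc d) y"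
  using lam_nonneg xo_nonneg by simp

lemma xi_eq_sold_plus_returned:
  assumes k: "k \<in> Ia d"
  shows "xi (Suc d) k =
    (\<Sum>y\<in>Oc d. lam (Suc d) k y * xo (Suc d) y) + (\<Sum>y\<in>Oti d k. lam (Suc d) k y * xo (Suc d) y)"
proof -
  have "xi (Suc d) k = (\<Sum>y\<in>Oc d. lam (Suc d) k y * xo (Suc d) y) + (\<Sum>y\<in>Ot d. lam (Suc d) k y * xo (Suc d) y)"
    using xi_eq[OF k] Ob_eq[of d] Otil_disjoint_Oc sum.union_disjoint[OF finite_Oc finite_Ot] by metis
  moreover have "lam (Suc d) k y = 0" if "y \<in> Ot d - Oti d k" for y
    using that lam_pos_Otil[OF k] lam_nonneg[OF k, of y] Ob_eq[of d] by force
  then have "(\<Sum>y\<in>Ot d. lam (Suc d) k y * xo (Suc d) y) = (\<Sum>y\<in>Oti d k. lam (Suc d) k y * xo (Suc d) y)"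
    by (intro sum.mono_neutral_right[OF finite_Ot Oti_subset_Ot]) auto
  ultimately show ?thesis by simp
qed

lemma sum_pp_Suc:
  assumes k: "k \<in> Ia d" and V: "V \<subseteq> Obj"
  shows "(\<Sum>y\<in>V. pp (Suc d) k y) = (\<Sum>y\<in>V. pp d k y)
      - (\<Sum>y\<in>V \<inter> Oti d k. lam (Suc d) k y * xo (Suc d) y) + xi (Suc d) k * (\<Sum>y\<in>V \<inter> Ob d. gam (Suc d) k y)"
proof -
  have fin: "finite V" using V finite_subset finite_Obj by auto
  have "(\<Sum>y\<in>V. pp (Suc d) k y) = (\<Sum>y\<in>V. pp d k y)
      - (\<Sum>y\<in>V. if y \<in> Oti d k then lam (Suc d) k y * xo (Suc d) y else 0)
      + (\<Sum>y\<in>V. if y \<in> Ob d then gam (Suc d) k y * xi (Suc d) k else 0)"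
    using pp_Suc[OF k] V by (simp add: subset_iff sum.distrib sum_subtractf)
  moreover have "(\<Sum>y\<in>V. if y \<in> Ob d then gam (Suc d) k y * xi (Suc d) k else 0)
      = xi (Suc d) k * (\<Sum>y\<in>V \<inter> Ob d. gam (Suc d) k y)"
    by (simp add: sum.inter_restrict[OF fin, symmetric] sum_distrib_left mult.commute[of _ "xi (Suc d) k"])
  ultimately show ?thesis
    by (simp add: sum.inter_restrict[OF fin, symmetric])
qed

end

lemma om_nonneg: "d \<le> D \<Longrightarrow> k \<in> I \<Longrightarrow> y \<in> Obj \<Longrightarrow> 0 \<le> om d k y"
proof (induction d)
  case 0
  then show ?case using \<omega>_nonneg om_0 by simp
next
  case (Suc d)
  then have d: "d < D" by simp
  show ?case
  proof (cases "k \<in> Ia d")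
    case True
    have "lam (Suc d) k y * xo (Suc d) y \<le> om d k y" if "y \<in> Oc d"
      using traded_le_beta[OF d True that] beta_le_om[OF d True that] by linarith
    then show ?thesis using om_Suc[OF d True \<open>y \<in> Obj\<close>] by simp
  next
    case False
    then show ?thesis using inactive_unchanged[OF d] Suc by simp
  qed
qed

lemma om_Suc_le:
  assumes d: "d < D" and k: "k \<in> I" and y: "y \<in> Obj"
  shows "om (Suc d) k y \<le> om d k y"
proof (cases "k \<in> Ia d")
  case True
  then show ?thesis
    using om_Suc[OF d True y] traded_nonneg[OF d True, of y] om_nonneg[of d k y] d k y Ob_eq[of d]
    by (auto split: if_splits)
next
  case False
  then show ?thesis using inactive_unchanged[OF d k False y] by simp
qed

lemma om_eq_0_outside_Oc: "d \<le> D \<Longrightarrow> k \<in> I \<Longrightarrow> y \<in> Obj \<Longrightarrow> y \<notin> Oc d \<Longrightarrow> om d k y = 0"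
proof (induction d arbitrary: k)
  case 0
  then show ?case by simp
next
  case (Suc d)
  then have d: "d < D" by simp
  show ?case
  proof (cases "y \<in> Oc d")
    case True
    with Suc.prems have "\<not> (\<Sum>l\<in>I. om (Suc d) l y) > 0" by simp
    moreover have nonneg: "\<And>l. l \<in> I \<Longrightarrow> 0 \<le> om (Suc d) l y" using om_nonneg Suc.prems by simp
    moreover have "0 \<le> (\<Sum>l\<in>I. om (Suc d) l y)" using nonneg by (rule sum_nonneg)
    ultimately have "(\<Sum>l\<in>I. om (Suc d) l y) = 0" by linarith
    then show ?thesis using sum_nonneg_eq_0_iff[OF finite_I nonneg] Suc.prems by simp
  next
    case False
    then show ?thesis
      using om_Suc[OF d _ \<open>y \<in> Obj\<close>] inactive_unchanged[OF d \<open>k \<in> I\<close> _ \<open>y \<in> Obj\<close>] Suc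
      by (cases "k \<in> Ia d") auto
  qed
qed

lemma om_eq_0_inactive:
  assumes d: "d \<le> D" and k: "k \<in> I" "k \<notin> Ia d" and y: "y \<in> Obj"
  shows "om d k y = 0"
proof -
  have nonneg: "\<And>y. y \<in> Obj \<Longrightarrow> 0 \<le> om d k y" using om_nonneg[OF d k(1)] .
  have "\<not> (\<Sum>y\<in>Obj. om d k y) > 0" using k unfolding Iact_def by auto
  moreover have "0 \<le> (\<Sum>y\<in>Obj. om d k y)" using nonneg by (rule sum_nonneg)
  ultimately have "(\<Sum>y\<in>Obj. om d k y) = 0" by linarith
  then show ?thesis using sum_nonneg_eq_0_iff[OF finite_Obj nonneg] y by simp
qed

lemma pp_nonneg: "d \<le> D \<Longrightarrow> k \<in> I \<Longrightarrow> y \<in> Obj \<Longrightarrow> 0 \<le> pp d k y"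
proof (induction d)
  case 0
  then show ?case using pp_0 by simp
next
  case (Suc d)
  then have d: "d < D" by simp
  show ?case
  proof (cases "k \<in> Ia d")
    case True
    have "(if y \<in> Oti d k then lam (Suc d) k y * xo (Suc d) y else 0) \<le> pp d k y"
      using traded_le_pp[OF d True] Oti_subset_Ot[of d k] Suc by auto
    moreover have "0 \<le> (if y \<in> Ob d then gam (Suc d) k y * xi (Suc d) k else 0)"
      using gam_nonneg[OF d True] xi_nonneg[OF d True] by simp
    ultimately show ?thesis using pp_Suc[OF d True \<open>y \<in> Obj\<close>] by linarith
  next
    case False
    then show ?thesis using inactive_unchanged[OF d] Suc by simp
  qed
qed

lemma pp_increase_pointed:
  assumes d: "d < D" and k: "k \<in> I" and y: "y \<in> Obj" and incr: "pp d k y < pp (Suc d) k y"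
  shows "k \<in> Ia d \<and> y \<in> Ob d \<and> gam (Suc d) k y > 0"
proof -
  have active: "k \<in> Ia d" using inactive_unchanged[OF d k _ y] incr by force
  have "0 \<le> (if y \<in> Oti d k then lam (Suc d) k y * xo (Suc d) y else 0)"
    using traded_nonneg[OF d active] Oti_subset_Ot[of d k] Ob_eq[of d] by auto
  then have "y \<in> Ob d" "gam (Suc d) k y * xi (Suc d) k > 0"
    using pp_Suc[OF d active y] incr by (auto split: if_splits)
  then show ?thesis using active gam_nonneg[OF d active, of y] by (auto simp: less_le)
qed

definition held_weakly_best :: "nat \<Rightarrow> bool" where
  "held_weakly_best d \<longleftrightarrow> (\<forall>k\<in>I. \<forall>w\<in>Obj. pp d k w > 0 \<longrightarrow> (\<forall>z\<in>Ob d. R k w z))"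

lemma Ob_Suc_subset_if_held_weakly_best:
  assumes d: "d < D" and held: "held_weakly_best d"
  shows "Ob (Suc d) \<subseteq> Ob d"
proof (rule Obar_least)
  show "Oc (Suc d) \<subseteq> Ob d" unfolding Obar_def by auto
next
  fix k w z assume k: "k \<in> I" and w: "w \<in> Obj" and pos: "0 < pp (Suc d) k w" and z: "z \<in> Ob d"
    and zw: "indiff R k z w"
  show "w \<in> Ob d"
  proof (cases "pp d k w > 0")
    case True
    show ?thesis
    proof (rule Obar_closed_under_indiff[OF k Oc_subset _ _ w(1) True z zw])
      show "\<And>a b c. a \<in> Obj \<Longrightarrow> b \<in> Obj \<Longrightarrow> c \<in> Obj \<Longrightarrow> R k a b \<Longrightarrow> R k b c \<Longrightarrow> R k a c"
        using pref_trans[OF k] .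
      show "\<And>w' z'. w' \<in> Obj \<Longrightarrow> pp d k w' > 0 \<Longrightarrow> z' \<in> Ob d \<Longrightarrow> R k w' z'"
        using held k unfolding held_weakly_best_def by blast
    qed
  next
    case False
    then show ?thesis using pp_increase_pointed[OF d k w] pos by simp
  qed
qed

text \<open>Objects held at step \<open>d + 1\<close> were held at step \<open>d\<close> or pointed at, i.e. maximal in \<open>\<overline>O(d)\<close>,
which contains \<open>\<overline>O(d + 1)\<close>.\<close>

lemma held_weakly_best: "d \<le> D \<Longrightarrow> held_weakly_best d"
proof (induction d)
  case 0
  then show ?case using pp_0 unfolding held_weakly_best_def by simp
next
  case (Suc d)
  then have d: "d < D" and held: "held_weakly_best d" by auto
  show ?case unfolding held_weakly_best_def
  proof (intro ballI impI)
    fix k w z assume k: "k \<in> I" and w: "w \<in> Obj" and pos: "0 < pp (Suc d) k w" and z: "z \<in> Ob (Suc d)"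
    have z: "z \<in> Ob d" using Ob_Suc_subset_if_held_weakly_best[OF d held] z by blast
    show "R k w z"
    proof (cases "pp d k w > 0")
      case True
      then show ?thesis using held k w z unfolding held_weakly_best_def by blast
    next
      case False
      then have "w \<in> Aset I Obj R (Oc d) (pp d) k"
        using pp_increase_pointed[OF d k w] pos gam_pos_Aset[OF d] by auto
      then show ?thesis using z unfolding Aset_def Bset_def by auto
    qed
  qed
qed

lemma Ob_Suc_subset: "d < D \<Longrightarrow> Ob (Suc d) \<subseteq> Ob d"
  using Ob_Suc_subset_if_held_weakly_best held_weakly_best by simp

definition sold :: "'i \<Rightarrow> nat \<Rightarrow> real" where
  "sold k d = (\<Sum>y\<in>Obj. \<omega> k y - om d k y)"

lemma sold_0: "k \<in> I \<Longrightarrow> sold k 0 = 0"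
  by (simp add: sold_def om_0)

lemma sold_Suc:
  assumes d: "d < D" and k: "k \<in> Ia d"
  shows "sold k (Suc d) = sold k d + (\<Sum>y\<in>Oc d. lam (Suc d) k y * xo (Suc d) y)"
proof -
  have kI: "k \<in> I" using k Ia_subset by blast
  have "sold k (Suc d) - sold k d = (\<Sum>y\<in>Obj. om d k y - om (Suc d) k y)"
    unfolding sold_def by (simp add: sum_subtractf)
  also have "\<dots> = (\<Sum>y\<in>Oc d. om d k y - om (Suc d) k y)"
    using om_eq_0_outside_Oc[of d k] om_Suc[OF d k] d kI
    by (intro sum.mono_neutral_right[OF finite_Obj Oc_subset]) auto
  also have "\<dots> = (\<Sum>y\<in>Oc d. lam (Suc d) k y * xo (Suc d) y)"
    using om_Suc[OF d k] Oc_subset[of d] by (intro sum.cong) auto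
  finally show ?thesis by simp
qed

lemma sold_Suc_inactive: "d < D \<Longrightarrow> k \<in> I \<Longrightarrow> k \<notin> Ia d \<Longrightarrow> sold k (Suc d) = sold k d"
  unfolding sold_def using inactive_unchanged by simp

lemma sum_pp_eq_sold: "d \<le> D \<Longrightarrow> k \<in> I \<Longrightarrow> (\<Sum>y\<in>Obj. pp d k y) = sold k d"
proof (induction d)
  case 0
  then show ?case using pp_0 sold_0 by simp
next
  case (Suc d)
  then have d: "d < D" by simp
  show ?case
  proof (cases "k \<in> Ia d")
    case True
    have "Oti d k \<subseteq> Obj" "Ob d \<subseteq> Obj"
      using Oti_subset_Ot[of d k] Otil_subset[of I Obj R "Oc d" "pp d"] Ob_subset by auto
    then have "(\<Sum>y\<in>Obj. pp (Suc d) k y) = (\<Sum>y\<in>Obj. pp d k y)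
        - (\<Sum>y\<in>Oti d k. lam (Suc d) k y * xo (Suc d) y) + xi (Suc d) k"
      using sum_pp_Suc[OF d True order_refl] sum_gam[OF d True] by (simp add: Int_absorb1)
    then show ?thesis
      using xi_eq_sold_plus_returned[OF d True] sold_Suc[OF d True] Suc by simp
  next
    case False
    then show ?thesis
      using inactive_unchanged[OF d \<open>k \<in> I\<close> False] sold_Suc_inactive[OF d \<open>k \<in> I\<close> False] Suc by simp
  qed
qed

lemma bounded_advantage_Suc:
  assumes ba: "bounded_advantage I Obj R om pp lam D"
    and d: "d < D" and k: "k \<in> I" and l: "l \<in> I" and y: "y \<in> Obj" and le: "om d l y \<le> om d k y"
  shows "om (Suc d) l y \<le> om (Suc d) k y \<and> om d l y - om (Suc d) l y \<le> om d k y - om (Suc d) k y"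
proof (cases "l \<in> Ia d")
  case False
  then show ?thesis
    using om_eq_0_inactive[of d l y] inactive_unchanged[OF d l False y] om_nonneg[of "Suc d" k y]
      om_Suc_le[OF d k y] d k l y by simp
next
  case l_active: True
  show ?thesis
  proof (cases "k \<in> Ia d")
    case False
    then show ?thesis
      using om_eq_0_inactive[of d k y] inactive_unchanged[OF d k False y] om_nonneg[of d l y]
        om_nonneg[of "Suc d" l y] om_Suc_le[OF d l y] d k l y le by simp
  next
    case k_active: True
    show ?thesis
    proof (cases "y \<in> Oc d")
      case True
      then have "lam (Suc d) l y \<le> lam (Suc d) k y" "om (Suc d) l y \<le> om (Suc d) k y"
        using ba d k_active l_active le unfolding bounded_advantage_def Let_def by auto
      moreover have "0 \<le> xo (Suc d) y" using xo_nonneg[OF d] True unfolding Obar_def by blast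
      ultimately show ?thesis
        using om_Suc[OF d k_active y] om_Suc[OF d l_active y] True by (simp add: mult_right_mono)
    next
      case False
      then show ?thesis
        using om_Suc[OF d k_active y] om_Suc[OF d l_active y] om_eq_0_outside_Oc[of d] d k l y by simp
    qed
  qed
qed

lemma bounded_advantage_preserves_order:
  assumes ba: "bounded_advantage I Obj R om pp lam D"
    and k: "k \<in> I" and l: "l \<in> I" and y: "y \<in> Obj" and le: "\<omega> l y \<le> \<omega> k y"
  shows "d \<le> D \<Longrightarrow> om d l y \<le> om d k y \<and> \<omega> l y - om d l y \<le> \<omega> k y - om d k y"
proof (induction d)
  case 0
  then show ?case using om_0 k l y le by simp
next
  case (Suc d)
  then show ?case using bounded_advantage_Suc[OF ba _ k l y, of d] by force
qed

lemma sold_diff_le: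
  assumes ba: "bounded_advantage I Obj R om pp lam D"
    and t: "t \<le> D" and i: "i \<in> I" and j: "j \<in> I"
  shows "sold j t - sold i t \<le> (\<Sum>y\<in>{y\<in>Obj. \<omega> j y > \<omega> i y}. \<omega> j y - \<omega> i y)"
proof -
  have "(\<omega> j y - om t j y) - (\<omega> i y - om t i y) \<le> (if \<omega> j y > \<omega> i y then \<omega> j y - \<omega> i y else 0)"
    if y: "y \<in> Obj" for y
    using bounded_advantage_preserves_order[OF ba i j y, of t] bounded_advantage_preserves_order[OF ba j i y, of t] t
    by auto
  then have "sold j t - sold i t \<le> (\<Sum>y\<in>Obj. if \<omega> j y > \<omega> i y then \<omega> j y - \<omega> i y else 0)"
    unfolding sold_def by (simp add: sum_subtractf[symmetric] sum_mono)
  then show ?thesis by (simp add: sum.inter_filter[OF finite_Obj])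
qed

context
  fixes i :: 'i and ob :: 'o
begin

definition upper :: "'o set" where "upper = {y\<in>Obj. R i y ob}"

definition upper_mass :: "'i \<Rightarrow> nat \<Rightarrow> real" where "upper_mass k d = (\<Sum>y\<in>upper. pp d k y)"

lemma upper_subset: "upper \<subseteq> Obj" unfolding upper_def by auto

lemma upper_mass_Suc_if_disjoint:
  assumes d: "d < D" and k: "k \<in> I" and disj: "upper \<inter> Ob d = {}"
  shows "upper_mass k (Suc d) = upper_mass k d"
proof (cases "k \<in> Ia d")
  case True
  have "upper \<inter> Oti d k = {}" using disj Oti_subset_Ot[of d k] Ob_eq[of d] by blast
  then show ?thesis unfolding upper_mass_def using sum_pp_Suc[OF d True upper_subset] disj by simp
next
  case False
  then show ?thesis
    unfolding upper_mass_def using inactive_unchanged[OF d k False] upper_subset by (intro sum.cong) auto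
qed

lemma Aset_subset_upper:
  assumes i: "i \<in> I" and ob: "ob \<in> Obj" and u: "u \<in> upper \<inter> Ob d"
  shows "Aset I Obj R (Oc d) (pp d) i \<subseteq> upper"
proof
  fix y assume "y \<in> Aset I Obj R (Oc d) (pp d) i"
  then have y: "y \<in> Ob d" "R i y u" using u unfolding Aset_def Bset_def by auto
  moreover have "R i u ob" "u \<in> Obj" using u unfolding upper_def by auto
  ultimately show "y \<in> upper" using pref_trans[OF i _ _ ob] Ob_subset unfolding upper_def by blast
qed

text \<open>While \<open>U\<close> meets the market, \<open>i\<close> points into \<open>U\<close>: she receives all of \<open>x\<^sub>i\<close> there, and \<open>x\<^sub>i\<close>
covers both her sold endowment and everything she hands back.\<close>

lemma upper_mass_Suc_ge_if_meets:
  assumes d: "d < D" and i: "i \<in> I" and ob: "ob \<in> Obj" and meets: "upper \<inter> Ob d \<noteq> {}"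
  shows "upper_mass i d + (sold i (Suc d) - sold i d) \<le> upper_mass i (Suc d)"
proof (cases "i \<in> Ia d")
  case True
  obtain u where u: "u \<in> upper \<inter> Ob d" using meets by blast
  have "gam (Suc d) i y = 0" if "y \<in> Ob d - upper \<inter> Ob d" for y
    using that Aset_subset_upper[OF i ob u] gam_pos_Aset[OF d True, of y] gam_nonneg[OF d True, of y] by force
  then have "(\<Sum>y\<in>Ob d. gam (Suc d) i y) = (\<Sum>y\<in>upper \<inter> Ob d. gam (Suc d) i y)"
    by (intro sum.mono_neutral_right[OF finite_Ob]) auto
  then have gam_upper: "(\<Sum>y\<in>upper \<inter> Ob d. gam (Suc d) i y) = 1"
    using sum_gam[OF d True] by simp
  have "(\<Sum>y\<in>upper \<inter> Oti d i. lam (Suc d) i y * xo (Suc d) y) \<le> (\<Sum>y\<in>Oti d i. lam (Suc d) i y * xo (Suc d) y)"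
    using traded_nonneg[OF d True] Oti_subset_Ot[of d i] Ob_eq[of d]
      finite_subset[OF Oti_subset_Ot finite_Ot] by (intro sum_mono2) auto
  then show ?thesis
    using sum_pp_Suc[OF d True upper_subset] gam_upper xi_eq_sold_plus_returned[OF d True] sold_Suc[OF d True]
    unfolding upper_mass_def by simp
next
  case False
  have "upper_mass i (Suc d) = upper_mass i d"
    unfolding upper_mass_def using inactive_unchanged[OF d i False] upper_subset by (intro sum.cong) auto
  then show ?thesis using sold_Suc_inactive[OF d i False] by simp
qed

lemma upper_mass_envy_le:
  assumes ba: "bounded_advantage I Obj R om pp lam D"
    and i: "i \<in> I" and j: "j \<in> I" and ob: "ob \<in> Obj"
  shows "upper_mass j D - upper_mass i D \<le> (\<Sum>y\<in>{y\<in>Obj. \<omega> j y > \<omega> i y}. \<omega> j y - \<omega> i y)"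
proof -
  define meets where "meets d \<longleftrightarrow> upper \<inter> Ob d \<noteq> {}" for d
  have "meets d" if "Suc d < D" "meets (Suc d)" for d
    using that Ob_Suc_subset[of d] unfolding meets_def by auto
  then obtain t where t: "t \<le> D" and before: "\<And>d. d < t \<Longrightarrow> meets d"
    and after: "\<And>d. t \<le> d \<Longrightarrow> d < D \<Longrightarrow> \<not> meets d"
    using downward_closed_threshold[of D meets] by blast
  have frozen: "upper_mass k d = upper_mass k t" if k: "k \<in> I" and "t \<le> d" "d \<le> D" for k d
    using that(2,3)
  proof (induction d)
    case (Suc d)
    show ?case
    proof (cases "t \<le> d")
      case True
      then have "upper_mass k (Suc d) = upper_mass k d"
        using Suc.prems after[of d] unfolding meets_def by (intro upper_mass_Suc_if_disjoint[OF _ k]) auto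
      then show ?thesis using Suc True by simp
    next
      case False
      then show ?thesis using Suc.prems by (simp add: le_Suc_eq)
    qed
  qed simp
  have sold_le: "sold i d \<le> upper_mass i d" if "d \<le> t" for d
    using that
  proof (induction d)
    case 0
    have "upper_mass i 0 = 0"
      unfolding upper_mass_def using pp_0[OF i] upper_subset by (intro sum.neutral) auto
    then show ?case using sold_0[OF i] by simp
  next
    case (Suc d)
    then have "d < t" "sold i d \<le> upper_mass i d" by simp_all
    moreover have "d < D" using \<open>d < t\<close> t by simp
    ultimately show ?case using upper_mass_Suc_ge_if_meets[OF _ i ob] before unfolding meets_def by fastforce
  qed
  have "upper_mass j t \<le> (\<Sum>y\<in>Obj. pp t j y)"
    unfolding upper_mass_def using pp_nonneg[OF t j] by (intro sum_mono2[OF finite_Obj upper_subset]) auto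
  then show ?thesis
    using frozen[OF i t order_refl] frozen[OF j t order_refl] sold_le[OF order_refl]
      sold_diff_le[OF ba t i j] sum_pp_eq_sold[OF t j]
    by linarith
qed

end

end

theorem proposition2:
  fixes I :: "'i set" and Obj :: "'o set" and R :: "'i \<Rightarrow> 'o \<Rightarrow> 'o \<Rightarrow> bool"
    and \<omega> :: "'i \<Rightarrow> 'o \<Rightarrow> real"
    and om pp lam beta gam :: "nat \<Rightarrow> 'i \<Rightarrow> 'o \<Rightarrow> real"
    and xi :: "nat \<Rightarrow> 'i \<Rightarrow> real" and xo :: "nat \<Rightarrow> 'o \<Rightarrow> real" and D :: nat
  assumes "FEE_problem I Obj R \<omega>"
    and "fttc_run I Obj R \<omega> om pp lam beta gam xi xo D"
    and "bounded_advantage I Obj R om pp lam D"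
  shows "\<forall>i\<in>I. \<forall>j\<in>I. \<forall>ob\<in>Obj.
           (\<Sum>ob'\<in>{ob'\<in>Obj. R i ob' ob}. pp D j ob') - (\<Sum>ob'\<in>{ob'\<in>Obj. R i ob' ob}. pp D i ob')
             \<le> (\<Sum>ob''\<in>{ob''\<in>Obj. \<omega> j ob'' > \<omega> i ob''}. \<omega> j ob'' - \<omega> i ob'')"
proof -
  interpret fttc_execution I Obj R \<omega> om pp lam beta gam xi xo D
    using assms(1,2) by unfold_locales
  show ?thesis
    using upper_mass_envy_le[OF assms(3)] unfolding upper_mass_def upper_def by blast
qed

end
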